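(* Let $i\ge 2$ be an integer and $k=2^i-1$. Let $k^-$ denote the least positive integer congruent to $-k$ modulo $i$. Then $$a_k\le 2^{k+k^-}+2^k-2^{k-i}-1.$$ If moreover $k=2^i-1$ is prime, then equality holds, i.e. $a_k=2^{k+i-1}+2^k-2^{k-i}-1$ (here $k^-=i-1$). Consequently, if there are infinitely many Mersenne primes, then $c_k/2^k\to 1/2$ as $k\to\infty$ through Mersenne primes.
   Context: For a positive integer $k$, $a_k$ is the smallest positive multiple of $k$ whose sum of binary digits equals $k$, and $c_k=a_k/k$. *)

theory Defs
  imports Complex_Main "HOL-Computational_Algebra.Primes" "HOL-Number_Theory.Cong"
begin

fun bin_digit_sum :: "nat \<Rightarrow> nat" where
  "bin_digit_sum n = (if n = 0 then 0 else n mod 2 + bin_digit_sum (n div 2))"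

definition a_seq :: "nat \<Rightarrow> nat" where
  "a_seq k = (LEAST m. 0 < m \<and> k dvd m \<and> bin_digit_sum m = k)"

definition c_seq :: "nat \<Rightarrow> real" where
  "c_seq k = real (a_seq k) / real k"

definition kminus :: "nat \<Rightarrow> nat \<Rightarrow> nat" where
  "kminus i k = (LEAST m::nat. 0 < m \<and> [int m = - int k] (mod int i))"

definition mersenne_primes :: "nat set" where
  "mersenne_primes = {k. prime k \<and> (\<exists>i\<ge>2. k = 2 ^ i - 1)}"

end

theory Submission
  imports Defs "HOL-Number_Theory.Number_Theory"
begin

(* Let k = 2^i - 1 be a Mersenne number and write s(n) for the binary digit sum.
   Since 2^i = 1 modulo k, powers of two reduce as 2^n = 2^(n mod i) (mod k), and
   folding the binary expansion of n into blocks of i bits shows that every positive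
   multiple of k has s(n) >= i.

   Upper bound: if i divides k + e, the number 2^(k+e) + 2^k - 2^(k-i) - 1 is a
   multiple of k with digit sum k; taking e = kminus i k = i - (k mod i) bounds a_k.

   Lower bound: if k mod i = 1 (true when k is prime, by Fermat's little theorem
   applied to the prime exponent i), let m be a multiple of k with s(m) = k.
   Complementing m inside 2^(k+i-1) bits gives a positive multiple of k with
   digit sum i - 1, impossible; so m >= 2^(k+i-1).  Complementing inside k + i bits
   gives x with s(x) = i and x = 1 (mod k); analysing the top i - 1 bits of x shows
   x <= (2^(i-1) - 1) 2^k + 2^(k-i), which is the claimed bound for m. *)

lemma bin_digit_sum_0 [simp]: "bin_digit_sum 0 = 0"
  by simp

(* The defining equation unfolds forever under simp; it is replaced by the
   equations below, which peel off one binary digit at a time. *)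
declare bin_digit_sum.simps [simp del]

lemma bin_digit_sum_split: "bin_digit_sum n = n mod 2 + bin_digit_sum (n div 2)"
  by (cases "n = 0") (simp_all add: bin_digit_sum.simps [of n])

lemma bin_digit_sum_digit:
  assumes "r < 2"
  shows "bin_digit_sum (2 * m + r) = r + bin_digit_sum m"
  using assms bin_digit_sum_split [of "2 * m + r"] by simp

lemma bin_digit_sum_1 [simp]: "bin_digit_sum (Suc 0) = 1"
  using bin_digit_sum_digit [of 1 0] by simp

lemma bin_digit_sum_concat:
  assumes "b < 2 ^ j"
  shows "bin_digit_sum (a * 2 ^ j + b) = bin_digit_sum a + bin_digit_sum b"
  using assms
proof (induction j arbitrary: b)
  case 0
  then show ?case by simp
next
  case (Suc j)
  have "a * 2 ^ Suc j + b = 2 * (a * 2 ^ j + b div 2) + b mod 2"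
    by simp
  then have "bin_digit_sum (a * 2 ^ Suc j + b) = b mod 2 + bin_digit_sum (a * 2 ^ j + b div 2)"
    by (simp only: bin_digit_sum_digit mod_less_divisor zero_less_numeral)
  also have "\<dots> = bin_digit_sum a + (b mod 2 + bin_digit_sum (b div 2))"
    using Suc by simp
  finally show ?case
    by (simp add: bin_digit_sum_split [of b])
qed

lemma bin_digit_sum_pow2 [simp]: "bin_digit_sum (2 ^ j) = 1"
  using bin_digit_sum_concat [of 0 j 1] by simp

(* Complementing the bits of y inside an n-bit window: each of the n positions
   is a one-digit in exactly one of y and 2^n - 1 - y. *)
lemma bin_digit_sum_complement:
  assumes "y < 2 ^ n"
  shows "bin_digit_sum y + bin_digit_sum (2 ^ n - 1 - y) = n"
  using assms
proof (induction n arbitrary: y)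
  case 0
  then show ?case by simp
next
  case (Suc n)
  have y': "y div 2 < 2 ^ n"
    using Suc.prems by simp
  have split: "(2::nat) ^ Suc n - 1 - y = 2 * (2 ^ n - 1 - y div 2) + (1 - y mod 2)"
    using y' div_mult_mod_eq [of y 2] mod_less_divisor [of 2 y] by (simp add: algebra_simps)
  have "bin_digit_sum (2 ^ Suc n - 1 - y) = (1 - y mod 2) + bin_digit_sum (2 ^ n - 1 - y div 2)"
    unfolding split by (rule bin_digit_sum_digit) simp
  moreover have "y mod 2 \<le> 1"
    by simp
  ultimately show ?case
    using Suc.IH [OF y'] bin_digit_sum_split [of y] by linarith
qed

lemma bin_digit_sum_mask: "bin_digit_sum (2 ^ n - 1) = n"
  using bin_digit_sum_complement [of 0 n] by simp

lemma bin_digit_sum_add_carry: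
  assumes "c \<le> 1"
  shows "bin_digit_sum (a + b + c) \<le> bin_digit_sum a + bin_digit_sum b + c"
  using assms
proof (induction "a + b + c" arbitrary: a b c rule: less_induct)
  case less
  show ?case
  proof (cases "a + b + c = 0")
    case True
    then show ?thesis by simp
  next
    case False
    define c' where "c' = (a mod 2 + b mod 2 + c) div 2"
    define r where "r = (a mod 2 + b mod 2 + c) mod 2"
    have sum: "a + b + c = 2 * (a div 2 + b div 2 + c') + r"
      unfolding c'_def r_def by simp
    have "c' \<le> 1"
      using less.prems unfolding c'_def by simp
    moreover have "a div 2 + b div 2 + c' < a + b + c"
      using sum False by (cases "a div 2 + b div 2 + c' = 0") auto
    ultimately have IH: "bin_digit_sum (a div 2 + b div 2 + c')
        \<le> bin_digit_sum (a div 2) + bin_digit_sum (b div 2) + c'"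
      using less.hyps by blast
    have "bin_digit_sum (a + b + c) = r + bin_digit_sum (a div 2 + b div 2 + c')"
      unfolding sum by (rule bin_digit_sum_digit) (simp add: r_def)
    moreover have "r + c' \<le> a mod 2 + b mod 2 + c"
      unfolding r_def c'_def by simp
    ultimately show ?thesis
      using IH bin_digit_sum_split [of a] bin_digit_sum_split [of b] by simp
  qed
qed

lemma bin_digit_sum_add: "bin_digit_sum (a + b) \<le> bin_digit_sum a + bin_digit_sum b"
  using bin_digit_sum_add_carry [of 0 a b] by simp

lemma bin_digit_sum_eq_0_iff [simp]: "bin_digit_sum n = 0 \<longleftrightarrow> n = 0"
proof
  show "bin_digit_sum n = 0 \<Longrightarrow> n = 0"
  proof (induction n rule: nat_less_induct)
    case (1 n)
    then have "n mod 2 = 0" and "bin_digit_sum (n div 2) = 0"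
      using bin_digit_sum_split [of n] by simp_all
    moreover have "n div 2 = 0" if "n \<noteq> 0"
      using "1.IH" that \<open>bin_digit_sum (n div 2) = 0\<close> by simp
    ultimately show "n = 0"
      by fastforce
  qed
qed simp

lemma bin_digit_sum_eq_1:
  assumes "bin_digit_sum l = 1"
  shows "\<exists>p. l = 2 ^ p"
  using assms
proof (induction l rule: nat_less_induct)
  case (1 l)
  have l: "l = 2 * (l div 2) + l mod 2"
    by simp
  have "l \<noteq> 0"
    using "1.prems" by (metis bin_digit_sum_0 zero_neq_one)
  show ?case
  proof (cases "l mod 2 = 0")
    case True
    then have "bin_digit_sum (l div 2) = 1" and "l div 2 < l"
      using "1.prems" \<open>l \<noteq> 0\<close> bin_digit_sum_split [of l] by auto
    then obtain p where "l div 2 = 2 ^ p"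
      using "1.IH" by blast
    then have "l = 2 ^ Suc p"
      using l True by simp
    then show ?thesis ..
  next
    case False
    then have "bin_digit_sum (l div 2) = 0" and "l mod 2 = 1"
      using "1.prems" bin_digit_sum_split [of l] by auto
    then have "l = 2 ^ 0"
      using l by simp
    then show ?thesis ..
  qed
qed

(* Since 2^i = 1 modulo 2^i - 1, powers of two are periodic with period i. *)
lemma pow2_cong_mersenne: "[2 ^ n = 2 ^ (n mod i)] (mod 2 ^ i - 1 :: nat)"
proof -
  have "[2 ^ i - 1 + 1 = 0 + 1] (mod 2 ^ i - 1 :: nat)"
    by (intro cong_add cong_refl) (simp add: cong_0_iff)
  then have base: "[2 ^ i = 1] (mod 2 ^ i - 1 :: nat)"
    by simp
  have "(2::nat) ^ n = 2 ^ (i * (n div i) + n mod i)"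
    by simp
  also have "\<dots> = (2 ^ i) ^ (n div i) * 2 ^ (n mod i)"
    by (simp only: power_add power_mult)
  moreover have "[(2 ^ i) ^ (n div i) * 2 ^ (n mod i) = 1 ^ (n div i) * 2 ^ (n mod i)] (mod 2 ^ i - 1 :: nat)"
    by (intro cong_mult cong_pow base cong_refl)
  ultimately show ?thesis
    by (simp only: power_one mult_1)
qed

(* The residues 2^0, ..., 2^(i-1) modulo 2^i - 1 are pairwise distinct,
   because they are all smaller than the modulus. *)
lemma mersenne_pow2_residues_distinct:
  assumes "e < i" "f < i" and "[2 ^ e = 2 ^ f] (mod 2 ^ i - 1 :: nat)"
  shows "e = f"
proof (cases "i = 1")
  case True
  then show ?thesis using assms by simp
next
  case False
  then have "2 \<le> i" using assms by linarith
  then have "(2::nat) ^ (i - 1) < 2 ^ i - 1"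
    using power_Suc [of "2::nat" "i - 1"] one_less_power [of "2::nat" "i - 1"] by simp
  moreover have "(2::nat) ^ e \<le> 2 ^ (i - 1)" "(2::nat) ^ f \<le> 2 ^ (i - 1)"
    using assms by (simp_all add: power_increasing)
  ultimately have "(2::nat) ^ e < 2 ^ i - 1" "(2::nat) ^ f < 2 ^ i - 1"
    by linarith+
  then have "(2::nat) ^ e = 2 ^ f"
    using assms(3) by (intro cong_less_modulus_unique_nat)
  then show ?thesis
    by simp
qed

(* Every positive multiple of 2^i - 1 has at least i one-digits: cutting x into
   its top part q and its low i bits l gives the smaller multiple q + l, and
   s(q + l) <= s(q) + s(l) = s(x). *)
lemma mersenne_multiple_digit_sum:
  assumes "0 < x" and "(2 ^ i - 1) dvd x"
  shows "i \<le> bin_digit_sum x"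
proof (cases "i = 0")
  case False
  then have two: "(2::nat) \<le> 2 ^ i"
    using power_increasing [of 1 i "2::nat"] by simp
  show ?thesis
    using assms
  proof (induction x rule: less_induct)
    case (less x)
    show ?case
    proof (cases "x < 2 ^ i")
      case True
      obtain c where c: "x = (2 ^ i - 1) * c"
        using less.prems by blast
      have "c = 1"
      proof (rule ccontr)
        assume "c \<noteq> 1"
        then have "2 \<le> c" using c less.prems(1) by (cases c) auto
        then have "(2 ^ i - 1) * 2 \<le> x" unfolding c by simp
        then show False using True two by linarith
      qed
      then show ?thesis
        using c bin_digit_sum_mask by simp
    next
      case False
      define q where "q = x div 2 ^ i"
      define l where "l = x mod 2 ^ i"
      have x: "x = q * 2 ^ i + l"
        unfolding q_def l_def by (rule div_mult_mod_eq [symmetric])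
      have "0 < q"
        using False unfolding q_def by (simp add: div_greater_zero_iff)
      have "q * 2 \<le> q * 2 ^ i"
        using two by (rule mult_le_mono2)
      then have "q + l < x"
        unfolding x using \<open>0 < q\<close> by linarith
      have "[q * 2 ^ i + l = q * 1 + l] (mod 2 ^ i - 1)"
        using pow2_cong_mersenne [of i i] by (intro cong_add cong_mult cong_refl) simp
      then have "[x = q + l] (mod 2 ^ i - 1)"
        unfolding x by simp
      then have "(2 ^ i - 1) dvd (q + l)"
        using less.prems(2) cong_dvd_iff by blast
      then have "i \<le> bin_digit_sum (q + l)"
        using less.IH \<open>q + l < x\<close> \<open>0 < q\<close> by simp
      moreover have "bin_digit_sum (q + l) \<le> bin_digit_sum q + bin_digit_sum l"
        by (rule bin_digit_sum_add)
      moreover have "bin_digit_sum x = bin_digit_sum q + bin_digit_sum l"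
        using bin_digit_sum_concat [of l i q] x unfolding l_def by simp
      ultimately show ?thesis
        by linarith
    qed
  qed
qed simp

lemma mod_eq_less_imp_add_le:
  fixes p k i :: nat
  assumes "p mod i = k mod i" and "p < k"
  shows "p + i \<le> k"
proof -
  have "i dvd k - p"
    using assms mod_eq_dvd_iff_nat [of p k i] by simp
  then have "i \<le> k - p"
    using assms(2) by (simp add: dvd_imp_le)
  then show ?thesis
    using assms(2) by linarith
qed

lemma complement_cong_mersenne:
  assumes "(2 ^ i - 1) dvd m" and "m < 2 ^ n"
  shows "[2 ^ n - m = 2 ^ (n mod i)] (mod 2 ^ i - 1 :: nat)"
proof -
  have "[0 = m] (mod 2 ^ i - 1)"
    using assms(1) by (simp add: cong_sym cong_0_iff)
  have "[2 ^ n - m + m = 2 ^ (n mod i) + 0] (mod 2 ^ i - 1 :: nat)"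
    using assms(2) pow2_cong_mersenne [of n i] by simp
  also have "[2 ^ (n mod i) + 0 = 2 ^ (n mod i) + m] (mod 2 ^ i - 1 :: nat)"
    by (intro cong_add cong_refl) fact
  finally show ?thesis
    by (simp only: cong_add_rcancel_nat)
qed

lemma dvd_complement_mod:
  fixes i k :: nat
  assumes "0 < i"
  shows "i dvd (i - k mod i) + k"
proof -
  have "k = k mod i + k div i * i" and "k mod i < i"
    using assms by simp_all
  then have "(i - k mod i) + k = i + k div i * i"
    by linarith
  then show ?thesis
    by simp
qed

lemma kminus_eq:
  assumes "0 < i"
  shows "kminus i k = i - k mod i"
proof -
  have cong_iff: "[int m = - int k] (mod int i) \<longleftrightarrow> i dvd m + k" for m
    by (simp add: cong_iff_dvd_diff flip: of_nat_add of_nat_dvd_iff)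
  have k: "k = k mod i + k div i * i"
    by simp
  have "i dvd (i - k mod i) + k"
    using assms by (rule dvd_complement_mod)
  show ?thesis
    unfolding kminus_def
  proof (rule Least_equality)
    show "0 < i - k mod i \<and> [int (i - k mod i) = - int k] (mod int i)"
      using assms \<open>i dvd (i - k mod i) + k\<close> cong_iff [of "i - k mod i"] by simp_all
  next
    fix m
    assume m: "0 < m \<and> [int m = - int k] (mod int i)"
    show "i - k mod i \<le> m"
    proof (rule ccontr)
      assume "\<not> i - k mod i \<le> m"
      then have "0 < m + k mod i" "m + k mod i < i"
        using m by linarith+
      moreover have "i dvd (m + k mod i) + k div i * i"
        using m cong_iff [of m] k by (simp add: add.assoc)
      then have "i dvd m + k mod i"
        by (simp only: dvd_add_times_triv_right_iff)
      ultimately show False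
        using dvd_imp_le by fastforce
    qed
  qed
qed

lemma mersenne_le_exponent: "i \<le> 2 ^ i - (1::nat)"
  using less_exp [of i] by linarith

(* The upper witness: when i divides k + e, the number
   2^(k+e) + 2^k - 2^(k-i) - 1, whose binary expansion is a single one-digit
   followed by the k-bit block 2^k - 1 - 2^(k-i), is a multiple of k with digit
   sum k. *)
lemma mersenne_witness:
  fixes i k e :: nat
  assumes "1 \<le> i" and k: "k = 2 ^ i - 1" and "i dvd k + e"
  defines "N \<equiv> 2 ^ (k + e) + 2 ^ k - 2 ^ (k - i) - 1"
  shows "0 < N" and "k dvd N" and "bin_digit_sum N = k"
proof -
  have "i \<le> k"
    unfolding k by (rule mersenne_le_exponent)
  have low_lt: "(2::nat) ^ (k - i) < 2 ^ k"
    using assms(1) \<open>i \<le> k\<close> by (intro power_strict_increasing) auto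
  define low :: nat where "low = 2 ^ k - 1 - 2 ^ (k - i)"
  have N: "N = 1 * 2 ^ (k + e) + low" and N': "N + 2 ^ (k - i) + 1 = 2 ^ (k + e) + 2 ^ k"
    unfolding N_def low_def using low_lt by linarith+
  have "low < 2 ^ (k + e)"
    unfolding low_def using low_lt power_increasing [of k "k + e" "2::nat"] by linarith
  moreover have "bin_digit_sum low = k - 1"
    using bin_digit_sum_complement [OF low_lt] unfolding low_def by simp
  ultimately show digits: "bin_digit_sum N = k"
    unfolding N using bin_digit_sum_concat [of low "k + e" 1] \<open>i \<le> k\<close> assms(1) by simp
  then show "0 < N"
    using \<open>i \<le> k\<close> assms(1) by (cases "N = 0") simp_all
  have "(k + e) mod i = 0" and "(k - i) mod i = k mod i"
    using assms(3) \<open>i \<le> k\<close> by (simp_all add: le_mod_geq)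
  then have "[2 ^ (k + e) = 1] (mod k)" and "[2 ^ (k - i) = 2 ^ (k mod i)] (mod k)"
    using pow2_cong_mersenne [of "k + e" i, folded k] pow2_cong_mersenne [of "k - i" i, folded k]
    by simp_all
  then have "[2 ^ (k + e) + 2 ^ k = 1 + 2 ^ (k - i)] (mod k)"
    using cong_trans [OF pow2_cong_mersenne [of k i, folded k] cong_sym]
    by (intro cong_add)
  then have "[2 ^ (k + e) + 2 ^ k = 0 + (2 ^ (k - i) + 1)] (mod k)"
    by (simp add: add.commute)
  then have "[N + (2 ^ (k - i) + 1) = 0 + (2 ^ (k - i) + 1)] (mod k)"
    using N' by (simp add: add.assoc)
  then show "k dvd N"
    by (simp only: cong_add_rcancel_nat cong_0_iff [symmetric])
qed

(* First half of the lower bound: if k mod i = 1, no multiple of k with digit sum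
   k lies below 2^(k+i-1), since its complement within k + i - 1 bits would be a
   positive multiple of k with only i - 1 one-digits. *)
lemma no_small_multiple:
  fixes i k m :: nat
  assumes "2 \<le> i" and k: "k = 2 ^ i - 1" and "k mod i = 1"
    and "k dvd m" and "bin_digit_sum m = k"
  shows "2 ^ (k + i - 1) \<le> m"
proof (rule ccontr)
  define n where "n = k + i - 1"
  assume "\<not> 2 ^ (k + i - 1) \<le> m"
  then have m_lt: "m < 2 ^ n"
    unfolding n_def by simp
  have "k = k div i * i + 1"
    using assms(3) div_mult_mod_eq [of k i] by simp
  then have "n = (k div i + 1) * i"
    unfolding n_def by simp
  then have "n mod i = 0"
    by simp
  define x where "x = 2 ^ n - 1 - m"
  have digits: "bin_digit_sum x = i - 1"
    using bin_digit_sum_complement [OF m_lt] assms(5) unfolding x_def n_def by simp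
  have "x + 1 = 2 ^ n - m"
    unfolding x_def using m_lt by linarith
  then have "[x + 1 = 0 + 1] (mod k)"
    using complement_cong_mersenne [of i m n, folded k] assms(4) m_lt \<open>n mod i = 0\<close> by simp
  then have "(2 ^ i - 1) dvd x"
    unfolding k [symmetric] by (simp only: cong_add_rcancel_nat cong_0_iff)
  moreover have "0 < x"
    using digits assms(1) by (cases "x = 0") simp_all
  ultimately have "i \<le> bin_digit_sum x"
    by (intro mersenne_multiple_digit_sum)
  then show False
    using digits assms(1) by simp
qed

(* Key step of the second half: if x = (2^(i-1) - 1) 2^k + 2^p satisfies
   x + 1 = 2 (mod k), then 2^(p mod i) = 2 (mod k), so p = k (mod i) and the
   low bit sits at position at most k - i. *)
lemma single_bit_position:
  fixes i k p :: nat
  assumes "2 \<le> i" and k: "k = 2 ^ i - 1" and "k mod i = 1" and "p < k"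
    and "[(2 ^ (i - 1) - 1) * 2 ^ k + 2 ^ p + 1 = 2] (mod k)"
  shows "p + i \<le> k"
proof -
  have "[2 ^ k = 2] (mod k)" and "[2 ^ p = 2 ^ (p mod i)] (mod k)"
    using pow2_cong_mersenne [of k i, folded k] pow2_cong_mersenne [of p i, folded k] assms(3)
    by simp_all
  then have "[(2 ^ (i - 1) - 1) * 2 ^ k + 2 ^ p + 1 = (2 ^ (i - 1) - 1) * 2 + 2 ^ (p mod i) + 1] (mod k)"
    by (intro cong_add cong_mult cong_refl)
  also have "(2 ^ (i - 1) - 1) * 2 + 2 ^ (p mod i) + 1 = k + 2 ^ (p mod i)"
  proof -
    have "(2::nat) ^ (i - 1) * 2 = 2 ^ i" and "1 \<le> (2::nat) ^ (i - 1)"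
      using assms(1) power_Suc2 [of "2::nat" "i - 1"] by simp_all
    then show ?thesis
      unfolding k by linarith
  qed
  also have "[k + 2 ^ (p mod i) = 0 + 2 ^ (p mod i)] (mod k)"
    by (intro cong_add cong_refl) (simp add: cong_0_iff)
  finally have residue: "[(2 ^ (i - 1) - 1) * 2 ^ k + 2 ^ p + 1 = 2 ^ (p mod i)] (mod k)"
    by simp
  have "[2 ^ (p mod i) = 2 ^ 1] (mod k)"
    using cong_trans [OF cong_sym [OF residue] assms(5)] by simp
  then have "p mod i = 1"
    using assms(1) unfolding k by (intro mersenne_pow2_residues_distinct [of _ i]) simp_all
  then have "p mod i = k mod i"
    using assms(3) by simp
  then show ?thesis
    using assms(4) by (rule mod_eq_less_imp_add_le)
qed

(* A number x below 2^(k+i-1) with i one-digits and x + 1 = 2 (mod k) is at most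
   (2^(i-1) - 1) 2^k + 2^(k-i): either its top i - 1 bits are not all set, or
   they are and the remaining single bit is located by single_bit_position. *)
lemma top_complement_bound:
  fixes i k x :: nat
  assumes "2 \<le> i" and k: "k = 2 ^ i - 1" and "k mod i = 1"
    and "x < 2 ^ (k + i - 1)" and "bin_digit_sum x = i" and "[x + 1 = 2] (mod k)"
  shows "x \<le> (2 ^ (i - 1) - 1) * 2 ^ k + 2 ^ (k - i)"
proof -
  define h where "h = x div 2 ^ k"
  define l where "l = x mod 2 ^ k"
  have x: "x = h * 2 ^ k + l" and "l < 2 ^ k"
    unfolding h_def l_def by (simp_all only: div_mult_mod_eq) simp
  have "(2::nat) ^ (k + i - 1) = 2 ^ (i - 1) * 2 ^ k"
    using assms(1) by (simp flip: power_add)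
  then have "h < 2 ^ (i - 1)"
    unfolding h_def using assms(4) by (simp add: less_mult_imp_div_less)
  then consider "h + 1 \<le> 2 ^ (i - 1) - 1" | "h = 2 ^ (i - 1) - 1"
    by linarith
  then show ?thesis
  proof cases
    case 1
    then have "(h + 1) * 2 ^ k \<le> (2 ^ (i - 1) - 1) * 2 ^ k"
      by (rule mult_right_mono) simp
    then show ?thesis
      unfolding x using \<open>l < 2 ^ k\<close> by simp
  next
    case 2
    have "bin_digit_sum x = bin_digit_sum h + bin_digit_sum l"
      unfolding x using \<open>l < 2 ^ k\<close> by (rule bin_digit_sum_concat)
    moreover have "bin_digit_sum h = i - 1"
      unfolding 2 by (rule bin_digit_sum_mask)
    ultimately have "bin_digit_sum l = 1"
      using assms(1, 5) by linarith
    then obtain p where p: "l = 2 ^ p"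
      using bin_digit_sum_eq_1 by blast
    then have "p < k"
      using \<open>l < 2 ^ k\<close> by simp
    moreover have "[(2 ^ (i - 1) - 1) * 2 ^ k + 2 ^ p + 1 = 2] (mod k)"
      using assms(6) unfolding x 2 p .
    ultimately have "p + i \<le> k"
      using assms(1-3) by (intro single_bit_position) 
    then have "l \<le> 2 ^ (k - i)"
      unfolding p by (simp add: power_increasing)
    then show ?thesis
      unfolding x 2 by simp
  qed
qed

(* The lower bound: when k mod i = 1, every multiple of k with digit sum k is at
   least 2^(k+i-1) + 2^k - 2^(k-i) - 1.  Its complement within k + i bits is
   controlled by top_complement_bound. *)
lemma mersenne_lower_bound:
  fixes i k m :: nat
  assumes "2 \<le> i" and k: "k = 2 ^ i - 1" and "k mod i = 1"
    and "k dvd m" and "bin_digit_sum m = k"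
  shows "2 ^ (k + i - 1) + 2 ^ k - 2 ^ (k - i) - 1 \<le> m"
proof -
  have "i \<le> k"
    unfolding k by (rule mersenne_le_exponent)
  have pow_top: "(2::nat) ^ (k + i) = 2 * 2 ^ (k + i - 1)"
    using assms(1) power_Suc [of "2::nat" "k + i - 1"] by simp
  have pow_mid: "(2::nat) ^ (k + i - 1) = 2 ^ (i - 1) * 2 ^ k"
    using assms(1) by (simp flip: power_add)
  have "(2::nat) ^ (k - i) < 2 ^ k" and "(2::nat) ^ k \<le> 2 ^ (k + i - 1)"
    using assms(1) \<open>i \<le> k\<close> by (simp_all add: power_strict_increasing power_increasing)
  have "2 ^ (k + i - 1) \<le> m"
    using assms by (rule no_small_multiple)
  show ?thesis
  proof (cases "m < 2 ^ (k + i)")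
    case False
    then show ?thesis
      using pow_top \<open>(2::nat) ^ k \<le> 2 ^ (k + i - 1)\<close> by linarith
  next
    case True
    define x where "x = 2 ^ (k + i) - 1 - m"
    have "bin_digit_sum x = i"
      using bin_digit_sum_complement [OF True] assms(5) unfolding x_def by simp
    moreover have "x < 2 ^ (k + i - 1)"
      unfolding x_def using \<open>2 ^ (k + i - 1) \<le> m\<close> pow_top
        zero_less_power [of "2::nat" "k + i - 1"] by linarith
    moreover have "[x + 1 = 2] (mod k)"
    proof -
      have "x + 1 = 2 ^ (k + i) - m" and "(k + i) mod i = 1"
        unfolding x_def using True assms(3) by simp_all
      then show ?thesis
        using complement_cong_mersenne [of i m "k + i", folded k] assms(4) True by simp
    qed
    ultimately have "x \<le> (2 ^ (i - 1) - 1) * 2 ^ k + 2 ^ (k - i)"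
      using assms(1-3) by (intro top_complement_bound)
    moreover have "2 ^ (k + i - 1) + 2 ^ k - 2 ^ (k - i) - 1
        + ((2 ^ (i - 1) - 1) * 2 ^ k + 2 ^ (k - i)) + 1 = (2::nat) ^ (k + i)"
    proof -
      have identity: "Q * P + P - R - 1 + ((Q - 1) * P + R) + 1 = 2 * (Q * P)"
        if "R < P" and "1 \<le> Q" for P Q R :: nat
      proof -
        have "(Q - 1) * P + P = Q * P"
          using that(2) by (simp add: diff_mult_distrib)
        then show ?thesis
          using that(1) by linarith
      qed
      show ?thesis
        unfolding pow_top pow_mid by (rule identity) (simp_all add: \<open>(2::nat) ^ (k - i) < 2 ^ k\<close>)
    qed
    moreover have "x + m + 1 = 2 ^ (k + i)"
      unfolding x_def using True by linarith
    ultimately show ?thesis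
      by linarith
  qed
qed

lemma mersenne_dvd:
  assumes "a dvd i"
  shows "(2 ^ a - 1) dvd (2 ^ i - 1 :: nat)"
proof -
  have "[2 ^ i = 1] (mod 2 ^ a - 1 :: nat)"
    using pow2_cong_mersenne [of i a] assms by simp
  then show ?thesis
    by (simp add: cong_altdef_nat)
qed

lemma mersenne_prime_exponent:
  assumes "prime (2 ^ i - 1 :: nat)"
  shows "prime i"
  unfolding prime_nat_iff
proof (intro conjI allI impI)
  show "1 < i"
  proof (rule ccontr)
    assume "\<not> 1 < i"
    then have "(2::nat) ^ i - 1 \<le> 1"
      by (cases i) auto
    then show False
      using prime_ge_2_nat [OF assms] by linarith
  qed
next
  fix a
  assume "a dvd i"
  then have "(2 ^ a - 1) dvd (2 ^ i - 1 :: nat)"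
    by (rule mersenne_dvd)
  then have "2 ^ a - 1 = (2 ^ 1 - 1 :: nat) \<or> 2 ^ a - 1 = (2 ^ i - 1 :: nat)"
    using assms unfolding prime_nat_iff by simp
  moreover have "c = d" if "2 ^ c - 1 = (2 ^ d - 1 :: nat)" for c d
  proof -
    have "(1::nat) \<le> 2 ^ c" and "(1::nat) \<le> 2 ^ d"
      by simp_all
    then have "(2::nat) ^ c = 2 ^ d"
      using that by linarith
    then show ?thesis
      by simp
  qed
  ultimately show "a = 1 \<or> a = i"
    by blast
qed

(* For a Mersenne prime k = 2^i - 1 we have k mod i = 1: for odd prime i this is
   Fermat's little theorem 2^i = 2 (mod i), and i = 2 is checked directly. *)
lemma mersenne_prime_mod_exponent:
  assumes "prime (2 ^ i - 1 :: nat)"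
  shows "(2 ^ i - 1) mod i = (1::nat)"
proof -
  have "prime i"
    using assms by (rule mersenne_prime_exponent)
  show ?thesis
  proof (cases "i = 2")
    case False
    then have "2 < i"
      using prime_ge_2_nat [OF \<open>prime i\<close>] by linarith
    then have "\<not> i dvd 2"
      using dvd_imp_le [of i 2] by linarith
    then have "[2 ^ (i - 1) = 1] (mod i)"
      by (rule fermat_theorem [OF \<open>prime i\<close>])
    then have "[2 * 2 ^ (i - 1) = 2 * 1] (mod i)"
      by (rule cong_scalar_left)
    moreover have "2 * 2 ^ (i - 1) = (2 ^ i - 1) + (1::nat)"
      using \<open>2 < i\<close> power_Suc [of "2::nat" "i - 1"] by simp
    ultimately have "[(2 ^ i - 1) + 1 = 1 + 1] (mod i)"
      by (simp only: mult_1_right one_add_one)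
    then have "[2 ^ i - 1 = 1] (mod i)"
      by (simp only: cong_add_rcancel_nat)
    then show ?thesis
      using \<open>2 < i\<close> by (simp add: cong_def)
  qed simp
qed

lemma a_seq_le:
  assumes "0 < m" and "k dvd m" and "bin_digit_sum m = k"
  shows "a_seq k \<le> m"
  unfolding a_seq_def using assms by (intro Least_le) simp

lemma a_seq_props:
  assumes "0 < m" and "k dvd m" and "bin_digit_sum m = k"
  shows "k dvd a_seq k" and "bin_digit_sum (a_seq k) = k"
proof -
  have "0 < a_seq k \<and> k dvd a_seq k \<and> bin_digit_sum (a_seq k) = k"
    unfolding a_seq_def by (rule LeastI) (use assms in blast)
  then show "k dvd a_seq k" and "bin_digit_sum (a_seq k) = k"
    by simp_all
qed

lemma a_seq_mersenne_upper:
  fixes i k :: nat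
  assumes "1 \<le> i" and k: "k = 2 ^ i - 1"
  shows "a_seq k \<le> 2 ^ (k + kminus i k) + 2 ^ k - 2 ^ (k - i) - 1"
proof -
  have "i dvd k + kminus i k"
    using assms(1) dvd_complement_mod [of i k] by (simp add: kminus_eq add.commute)
  then show ?thesis
    using mersenne_witness [OF assms] by (intro a_seq_le)
qed

lemma a_seq_mersenne_prime:
  fixes i k :: nat
  assumes "prime k" and k: "k = 2 ^ i - 1"
  shows "a_seq k = 2 ^ (k + i - 1) + 2 ^ k - 2 ^ (k - i) - 1"
proof -
  have "2 \<le> i"
    using assms mersenne_prime_exponent prime_ge_2_nat by blast
  have "k mod i = 1"
    using assms mersenne_prime_mod_exponent by blast
  then have "kminus i k = i - 1"
    using \<open>2 \<le> i\<close> by (simp add: kminus_eq)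
  then have upper: "a_seq k \<le> 2 ^ (k + i - 1) + 2 ^ k - 2 ^ (k - i) - 1"
    using a_seq_mersenne_upper [of i k] \<open>2 \<le> i\<close> k by simp
  have "i dvd k + (i - 1)"
    using dvd_complement_mod [of i k] \<open>2 \<le> i\<close> \<open>k mod i = 1\<close> by (simp add: add.commute)
  moreover have "1 \<le> i"
    using \<open>2 \<le> i\<close> by simp
  ultimately have "k dvd a_seq k" and "bin_digit_sum (a_seq k) = k"
    using a_seq_props [OF mersenne_witness [OF _ k]] by blast+
  then have "2 ^ (k + i - 1) + 2 ^ k - 2 ^ (k - i) - 1 \<le> a_seq k"
    using \<open>2 \<le> i\<close> k \<open>k mod i = 1\<close> by (intro mersenne_lower_bound)
  then show ?thesis
    using upper by linarith
qed

(* The exact value of c_k / 2^k for a Mersenne prime k, in a form whose limit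
   can be read off. *)
lemma c_seq_mersenne_prime:
  fixes i k :: nat
  assumes "prime k" and k: "k = 2 ^ i - 1"
  shows "c_seq k / 2 ^ k = 1 / 2 + (3 / 2 - inverse (real k + 1) - inverse (2 ^ k)) * inverse (real k)"
proof -
  have "2 \<le> i"
    using assms mersenne_prime_exponent prime_ge_2_nat by blast
  have "i \<le> k"
    unfolding k by (rule mersenne_le_exponent)
  have "(2::nat) ^ (k - i) < 2 ^ k"
    using \<open>2 \<le> i\<close> \<open>i \<le> k\<close> by (simp add: power_strict_increasing)
  then have nat_eq: "a_seq k + 2 ^ (k - i) + 1 = 2 ^ (k + i - 1) + 2 ^ k"
    using a_seq_mersenne_prime [OF assms] by linarith
  have "real (a_seq k) + 2 ^ (k - i) + 1 = 2 ^ (k + i - 1) + 2 ^ k"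
    using arg_cong [OF nat_eq, of real] by simp
  then have a: "real (a_seq k) = 2 ^ (k + i - 1) + 2 ^ k - 2 ^ (k - i) - 1"
    by linarith
  have pow_i: "(2::real) ^ i = real k + 1"
    unfolding k using one_le_power [of "2::real" i] by (simp add: of_nat_diff)
  have "(2::real) ^ (k + i - 1) * 2 = 2 ^ k * 2 ^ i"
    using \<open>2 \<le> i\<close> by (simp flip: power_Suc2 power_add)
  then have top: "(2::real) ^ (k + i - 1) = 2 ^ k * (real k + 1) / 2"
    unfolding pow_i by simp
  have "(2::real) ^ (k - i) * 2 ^ i = 2 ^ k"
    using \<open>i \<le> k\<close> by (simp flip: power_add)
  then have low: "(2::real) ^ (k - i) = 2 ^ k / (real k + 1)"
    unfolding pow_i by (simp add: field_simps)
  have identity: "(E * (K + 1) / 2 + E - E / (K + 1) - 1) / (K * E)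
      = 1 / 2 + (3 / 2 - inverse (K + 1) - inverse E) * inverse K"
    if "0 < E" and "0 < K" for E K :: real
    using that by (simp add: divide_simps) (simp add: algebra_simps)
  have "0 < real k"
    using \<open>2 \<le> i\<close> \<open>i \<le> k\<close> by simp
  then show ?thesis
    unfolding c_seq_def a top low by (simp add: identity)
qed

theorem mainTheorem7:
  shows "(\<forall>i::nat. i \<ge> 2 \<longrightarrow>
            (let k = 2 ^ i - 1 in
               a_seq k \<le> 2 ^ (k + kminus i k) + 2 ^ k - 2 ^ (k - i) - 1 \<and>
               (prime k \<longrightarrow> a_seq k = 2 ^ (k + i - 1) + 2 ^ k - 2 ^ (k - i) - 1)))
       \<and> (infinite mersenne_primes \<longrightarrow>
            ((\<lambda>k. c_seq k / 2 ^ k) \<longlongrightarrow> 1 / 2) (inf at_top (principal mersenne_primes)))"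
proof (intro conjI allI impI)
  fix i :: nat
  assume "i \<ge> 2"
  then show "let k = 2 ^ i - 1 in
      a_seq k \<le> 2 ^ (k + kminus i k) + 2 ^ k - 2 ^ (k - i) - 1 \<and>
      (prime k \<longrightarrow> a_seq k = 2 ^ (k + i - 1) + 2 ^ k - 2 ^ (k - i) - 1)"
    unfolding Let_def
    using a_seq_mersenne_upper [of i "2 ^ i - 1"] a_seq_mersenne_prime [of "2 ^ i - 1" i] by simp
next
  define g where "g k = 1 / 2 + (3 / 2 - inverse (real k + 1) - inverse (2 ^ k)) * inverse (real k)"
    for k :: nat
  have "(\<lambda>k. inverse (real k + 1)) \<longlonglongrightarrow> 0"
    using LIMSEQ_inverse_real_of_nat by (simp add: add.commute)
  moreover have "(\<lambda>k. inverse ((2::real) ^ k)) \<longlonglongrightarrow> 0"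
    by (rule LIMSEQ_inverse_realpow_zero) simp
  ultimately have "g \<longlonglongrightarrow> 1 / 2 + (3 / 2 - 0 - 0) * 0"
    unfolding g_def by (intro tendsto_intros lim_inverse_n)
  then have "(g \<longlongrightarrow> 1 / 2) (inf at_top (principal mersenne_primes))"
    by (simp add: tendsto_mono [OF inf_le1])
  moreover have "\<forall>\<^sub>F k in inf at_top (principal mersenne_primes). c_seq k / 2 ^ k = g k"
    unfolding eventually_inf_principal mersenne_primes_def g_def
    using c_seq_mersenne_prime by (intro always_eventually) blast
  ultimately show "((\<lambda>k. c_seq k / 2 ^ k) \<longlongrightarrow> 1 / 2) (inf at_top (principal mersenne_primes))"
    by (simp add: tendsto_cong)
qed

end
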